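(* Consider the unit-cost Correlated Pandora's Problem (all $c_i=1$) in which all volumes are positive even integers. Let $x$ be an optimal solution of the Unit-Cost Convex Program. Sample $k\in[0,4]$ with probability density $\frac{e^k}{e^4-1}$, and then run $k$-Delayed Activation with (Discrete-Time) Poisson Rounding built from $x$. The expected objective of this randomized algorithm is at most $\frac{4e^4}{e^4-1}\cdot\mathrm{OPT}\approx 4.075\cdot\mathrm{OPT}$.
   Context: Correlated Pandora's Problem: boxes $[n]$, box $i$ has opening cost $c_i$ (here $c_i=1$) and volume $v_i$; the scenario $v=(v_1,\dots,v_n)$ is drawn from a known, possibly correlated distribution $\mathcal{D}$. Opening box $i$ costs $c_i$ and reveals $v_i$; an algorithm repeatedly opens another box or stops and takes an opened box of minimum volume (if all are opened it takes the minimum); the objective is total opening cost plus taken volume, minimized in expectation. A partially adaptive algorithm fixes the opening order in advance and adaptively decides when to stop; $\mathrm{OPT}$ is the minimum expected objective of a partially adaptive algorithm. Write $x_+=\max\{x,0\}$. Unit-Cost Convex Program: variables $x_i(t)\ge 0$ for $i,t\in[n]$ with $\sum_{i\in[n]}x_i(t)\le 1$ for all $t\in[n]$; minimize $\mathbf{E}_{v\sim\mathcal{D}}\sum_{t=1}^\infty\big(1-\sum_{i\in[n]}\sum_{t'\in[n],\,t'<t-v_i}x_i(t')\big)_+$. Discrete-Time Poisson Rounding: let $\bar x_i(t)=\frac1t\sum_{t'=1}^{\min\{t,n\}}x_i(t')$ for positive integers $t$. Independently at each step $\tau=1,2,\dots$, sample box $i$ with probability $\bar x_i(\lceil\tau/2\rceil)$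 (and no box with the remaining probability). The arrival time $\alpha_i$ of box $i$ is the first step at which it is sampled ($\infty$ if never). All arrival times are sampled in advance. $k$-Delayed Activation: open the boxes one per unit time step in ascending order of $\alpha_i$; stop after time step $\min_i(\alpha_i+\lfloor kv_i\rfloor)$ (or when all boxes are opened) and take the opened box of minimum volume; the objective is the number of boxes opened plus the taken volume. *)

theory Defs
  imports "HOL-Probability.Probability"
begin

text \<open>Boxes are indexed by 0..<n; time steps of the convex program by 1..n.
  A scenario is a function v :: nat => nat (only v i for i < n matters);
  the distribution D is a discrete distribution (pmf) on scenarios.\<close>

text \<open>A partially adaptive algorithm: a fixed order sigma (a bijection of 0..<n) and a
  stopping rule that, given the list of volumes observed so far (in opening order),
  decides whether to stop.\<close>

definition pa_stop_time :: "nat \<Rightarrow> (nat \<Rightarrow> nat) \<Rightarrow> (nat list \<Rightarrow> bool) \<Rightarrow> (nat \<Rightarrow> nat) \<Rightarrow> nat" where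
  "pa_stop_time n \<sigma> stop v =
     (LEAST t. 1 \<le> t \<and> (stop (map (\<lambda>j. v (\<sigma> j)) [0..<t]) \<or> t = n))"

definition pa_cost :: "nat \<Rightarrow> (nat \<Rightarrow> nat) \<Rightarrow> (nat list \<Rightarrow> bool) \<Rightarrow> (nat \<Rightarrow> nat) \<Rightarrow> nat" where
  "pa_cost n \<sigma> stop v =
     pa_stop_time n \<sigma> stop v + Min ((\<lambda>j. v (\<sigma> j)) ` {..<pa_stop_time n \<sigma> stop v})"

definition OPT :: "nat \<Rightarrow> (nat \<Rightarrow> nat) pmf \<Rightarrow> ennreal" where
  "OPT n D = (INF p \<in> {(\<sigma>, stop). bij_betw \<sigma> {..<n} {..<n}}.
                 \<integral>\<^sup>+ v. ennreal (real (pa_cost n (fst p) (snd p) v)) \<partial>measure_pmf D)"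

definition cp_feasible :: "nat \<Rightarrow> (nat \<Rightarrow> nat \<Rightarrow> real) \<Rightarrow> bool" where
  "cp_feasible n x \<longleftrightarrow>
     (\<forall>i<n. \<forall>t\<in>{1..n}. 0 \<le> x i t) \<and> (\<forall>t\<in>{1..n}. (\<Sum>i<n. x i t) \<le> 1)"

definition cp_obj :: "nat \<Rightarrow> (nat \<Rightarrow> nat) pmf \<Rightarrow> (nat \<Rightarrow> nat \<Rightarrow> real) \<Rightarrow> ennreal" where
  "cp_obj n D x =
     (\<integral>\<^sup>+ v. (\<Sum>s. (let t = Suc s in
        ennreal (max 0 (1 - (\<Sum>i<n. \<Sum>t'\<in>{t'\<in>{1..n}. real t' < real t - real (v i)}. x i t')))))
      \<partial>measure_pmf D)"

definition cp_optimal :: "nat \<Rightarrow> (nat \<Rightarrow> nat) pmf \<Rightarrow> (nat \<Rightarrow> nat \<Rightarrow> real) \<Rightarrow> bool" where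
  "cp_optimal n D x \<longleftrightarrow> cp_feasible n x \<and> (\<forall>y. cp_feasible n y \<longrightarrow> cp_obj n D x \<le> cp_obj n D y)"

definition xbar :: "nat \<Rightarrow> (nat \<Rightarrow> nat \<Rightarrow> real) \<Rightarrow> nat \<Rightarrow> nat \<Rightarrow> real" where
  "xbar n x i t = (1 / real t) * (\<Sum>t'\<in>{1..min t n}. x i t')"

text \<open>Distribution of the draw at step tau (tau >= 1): Some i with probability
  xbar_i(ceil(tau/2)), None with the remaining probability. (Note ceil(tau/2) = (tau+1) div 2;
  step 0 is a dummy step that yields None with probability 1 and is ignored.)\<close>
definition draw_pmf :: "nat \<Rightarrow> (nat \<Rightarrow> nat \<Rightarrow> real) \<Rightarrow> nat \<Rightarrow> nat option pmf" where
  "draw_pmf n x \<tau> = embed_pmf (\<lambda>d. case d of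
       None \<Rightarrow> 1 - (\<Sum>i<n. xbar n x i ((\<tau> + 1) div 2))
     | Some i \<Rightarrow> (if i < n then xbar n x i ((\<tau> + 1) div 2) else 0))"

definition poisson_space :: "nat \<Rightarrow> (nat \<Rightarrow> nat \<Rightarrow> real) \<Rightarrow> (nat \<Rightarrow> nat option) measure" where
  "poisson_space n x = PiM UNIV (\<lambda>\<tau>. measure_pmf (draw_pmf n x \<tau>))"

definition arrival :: "(nat \<Rightarrow> nat option) \<Rightarrow> nat \<Rightarrow> enat" where
  "arrival \<omega> i = (if \<exists>\<tau>\<ge>1. \<omega> \<tau> = Some i
                   then enat (LEAST \<tau>. 1 \<le> \<tau> \<and> \<omega> \<tau> = Some i) else \<infinity>)"

text \<open>Boxes are opened in ascending order of arrival time (ties, which can only occur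
  among boxes with infinite arrival time, broken by index).\<close>
definition da_cost :: "nat \<Rightarrow> real \<Rightarrow> (nat \<Rightarrow> enat) \<Rightarrow> (nat \<Rightarrow> nat) \<Rightarrow> nat" where
  "da_cost n k \<alpha> v =
    (let T = Min ((\<lambda>i. \<alpha> i + enat (nat \<lfloor>k * real (v i)\<rfloor>)) ` {..<n});
         m = (case T of enat t \<Rightarrow> min t n | \<infinity> \<Rightarrow> n);
         S = {i. i < n \<and> card {j. j < n \<and> (\<alpha> j < \<alpha> i \<or> (\<alpha> j = \<alpha> i \<and> j < i))} < m}
     in m + Min (v ` S))"

definition alg_value :: "nat \<Rightarrow> (nat \<Rightarrow> nat) pmf \<Rightarrow> (nat \<Rightarrow> nat \<Rightarrow> real) \<Rightarrow> ennreal" where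
  "alg_value n D x =
     (\<integral>\<^sup>+ k. indicator {0..4} k * ennreal (exp k / (exp 4 - 1)) *
        (\<integral>\<^sup>+ \<omega>. (\<integral>\<^sup>+ v. ennreal (real (da_cost n k (arrival \<omega>) v)) \<partial>measure_pmf D)
           \<partial>poisson_space n x) \<partial>lborel)"

end

theory Submission
  imports Defs
begin

text \<open>Fix the arrival times \<alpha>. If box j minimizes \<alpha>_i + k v_i, then k-delayed activation stops
  by time \<alpha>_j + \<lfloor>k v_j\<rfloor> with box j opened, so it pays at most \<psi>(k) + \<psi>'(k), where
  \<psi>(k) = min_i (\<alpha>_i + k v_i) is concave and piecewise linear. Since (e^k \<psi>(k))' = e^k (\<psi>(k) + \<psi>'(k)),
  the expected cost under the density e^k/(e^4 - 1) on [0, 4] is at most e^4 \<psi>(4)/(e^4 - 1).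

  Under Poisson rounding, \<psi>(4) = min_i (\<alpha>_i + 4 v_i) exceeds t with probability at most
  exp (- \<Sum>_(i,t') x_i(t') w_t'(t - 4 v_i)), where the sampling weight w_t'(L) of slot t' grows like
  2 ln ((L/2 + 1)/t'), so that \<Sum>_L exp (- w_t'(L)) \<le> 4 t'. After truncating x to its first unit of
  mass in the order of t' + v_i, Jensen's inequality for exp bounds E[\<psi>(4)] by 4 times the
  objective of the convex program. Finally, every fixed opening order is a feasible 0/1 solution
  of the convex program whose objective is at most its cost, so the program's optimum is at most OPT.\<close>

section \<open>Sampling weight of a time slot\<close>

text \<open>Since xbar_i(u) averages x_i over the slots t' \<le> u, Poisson rounding samples box i
  during steps 1..L with total probability \<Sum>_t' x_i(t') * slot_weight t' L.\<close>
definition slot_weight :: "nat \<Rightarrow> nat \<Rightarrow> real" where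
  "slot_weight t' L = (\<Sum>\<tau>\<in>{\<tau>\<in>{1..L}. t' \<le> (\<tau> + 1) div 2}. 1 / real ((\<tau> + 1) div 2))"

lemma slot_weight_nonneg: "0 \<le> slot_weight t' L"
  unfolding slot_weight_def by (intro sum_nonneg) auto

lemma slot_weight_Suc:
  "slot_weight t' (Suc L) = slot_weight t' L + (if t' \<le> (L + 2) div 2 then 1 / real ((L + 2) div 2) else 0)"
proof -
  have "{\<tau>\<in>{1..Suc L}. t' \<le> (\<tau> + 1) div 2} =
        (if t' \<le> (L + 2) div 2 then insert (Suc L) {\<tau>\<in>{1..L}. t' \<le> (\<tau> + 1) div 2}
         else {\<tau>\<in>{1..L}. t' \<le> (\<tau> + 1) div 2})"
    by (auto simp: le_Suc_eq)
  then show ?thesis unfolding slot_weight_def by auto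
qed

lemma slot_weight_mono: "L \<le> L' \<Longrightarrow> slot_weight t' L \<le> slot_weight t' L'"
proof (induction L' rule: dec_induct)
  case (step m)
  have "slot_weight t' m \<le> slot_weight t' (Suc m)" by (simp add: slot_weight_Suc)
  then show ?case using step by linarith
qed simp

lemma slot_weight_double:
  assumes "1 \<le> t'"
  shows "slot_weight t' (2 * q) = 2 * (\<Sum>u\<in>{t'..q}. 1 / real u)"
proof (induction q)
  case 0
  then show ?case using assms by (simp add: slot_weight_def)
next
  case (Suc q)
  have "slot_weight t' (2 * Suc q) = slot_weight t' (2 * q) + 2 * (if t' \<le> Suc q then 1 / real (Suc q) else 0)"
    by (simp add: slot_weight_Suc)
  also have "\<dots> = 2 * (\<Sum>u\<in>{t'..Suc q}. 1 / real u)"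
    using Suc by (auto simp: atLeastAtMostSuc_conv algebra_simps)
  finally show ?case .
qed

lemma ln_le_sum_inverse:
  assumes "1 \<le> t'"
  shows "ln ((real q + 1) / real t') \<le> (\<Sum>u\<in>{t'..q}. 1 / real u)"
proof (induction q)
  case 0
  then show ?case using assms by (simp add: ln_div)
next
  case (Suc q)
  show ?case
  proof (cases "Suc q < t'")
    case True
    then have "ln ((real (Suc q) + 1) / real t') \<le> 0" using assms by simp
    moreover have "0 \<le> (\<Sum>u\<in>{t'..Suc q}. 1 / real u)" by (intro sum_nonneg) auto
    ultimately show ?thesis by linarith
  next
    case False
    have "ln ((real (Suc q) + 1) / real t') = ln ((real q + 1) / real t') + ln (1 + 1 / (real q + 1))"
      using assms by (simp add: ln_div field_simps ln_mult[symmetric])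
    also have "ln (1 + 1 / (real q + 1)) \<le> 1 / (real q + 1)"
      by (rule ln_add_one_self_le_self) simp
    finally show ?thesis using Suc False by (simp add: atLeastAtMostSuc_conv add.commute)
  qed
qed

lemma exp_neg_slot_weight_le:
  assumes "1 \<le> t'"
  shows "exp (- slot_weight t' L) \<le> min 1 ((real t' / (real (L div 2) + 1))\<^sup>2)"
proof -
  define q where "q = L div 2"
  have pos: "0 < (real q + 1) / real t'" using assms by simp
  have "2 * ln ((real q + 1) / real t') \<le> slot_weight t' (2 * q)"
    using slot_weight_double[OF assms] ln_le_sum_inverse[OF assms] by simp
  also have "\<dots> \<le> slot_weight t' L" unfolding q_def by (rule slot_weight_mono) simp
  finally have "exp (- slot_weight t' L) \<le> exp (- 2 * ln ((real q + 1) / real t'))" by simp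
  also have "\<dots> = (real t' / (real q + 1))\<^sup>2"
  proof -
    have "exp (- 2 * ln ((real q + 1) / real t')) = (inverse (exp (ln ((real q + 1) / real t'))))\<^sup>2"
      by (simp add: exp_minus[symmetric] power2_eq_square exp_add[symmetric])
    then show ?thesis using pos by (simp add: field_simps)
  qed
  finally show ?thesis using slot_weight_nonneg[of t' L] unfolding q_def by simp
qed

lemma sum_min_one_square_ratio_le:
  assumes "1 \<le> t'"
  shows "(\<Sum>q<N. min 1 ((real t' / (real q + 1))\<^sup>2)) \<le> 2 * real t'"
proof -
  let ?c = "\<lambda>q. min 1 ((real t' / (real q + 1))\<^sup>2)"
  text \<open>Beyond q = t' the terms telescope: t'^2/(q+1)^2 \<le> t'^2 (1/q - 1/(q+1)).\<close>
  have sharp: "(\<Sum>q<N. ?c q) \<le> (if N \<le> t' then real N else 2 * real t' - (real t')\<^sup>2 / real N)" for N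
  proof (induction N)
    case (Suc N)
    show ?case
    proof (cases "Suc N \<le> t'")
      case True
      then show ?thesis using Suc by simp
    next
      case False
      then have N_pos: "0 < real N" and "t' \<le> N" using assms by auto
      have "?c N \<le> (real t')\<^sup>2 / (real N + 1)\<^sup>2" by (simp add: power_divide)
      also have "\<dots> \<le> (real t')\<^sup>2 / (real N * (real N + 1))"
        using N_pos by (intro divide_left_mono) (auto simp: power2_eq_square)
      also have "\<dots> = (real t')\<^sup>2 * (1 / real N - 1 / (real N + 1))"
        using N_pos by (simp add: field_simps)
      finally have step: "?c N \<le> (real t')\<^sup>2 * (1 / real N - 1 / (real N + 1))" .
      have "(\<Sum>q<N. ?c q) \<le> 2 * real t' - (real t')\<^sup>2 / real N"
      proof (cases "N = t'")
        case True
        then show ?thesis using Suc by (simp add: power2_eq_square)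
      qed (use Suc \<open>t' \<le> N\<close> in simp)
      then have "(\<Sum>q<Suc N. ?c q) \<le> 2 * real t' - (real t')\<^sup>2 / real N + (real t')\<^sup>2 * (1 / real N - 1 / (real N + 1))"
        using step by simp
      also have "\<dots> = 2 * real t' - (real t')\<^sup>2 / real (Suc N)" by (simp add: field_simps)
      finally show ?thesis using False by simp
    qed
  qed simp
  moreover have "(if N \<le> t' then real N else 2 * real t' - (real t')\<^sup>2 / real N) \<le> 2 * real t'"
    by auto
  ultimately show ?thesis by (rule order.trans)
qed

lemma sum_lessThan_double_div2:
  fixes f :: "nat \<Rightarrow> real"
  shows "(\<Sum>L<2 * N. f (L div 2)) = 2 * (\<Sum>q<N. f q)"
  by (induction N) (auto simp: algebra_simps)

lemma sum_exp_neg_slot_weight_le: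
  assumes "1 \<le> t'"
  shows "(\<Sum>L<N. exp (- slot_weight t' L)) \<le> 4 * real t'"
proof -
  let ?c = "\<lambda>q. min 1 ((real t' / (real q + 1))\<^sup>2)"
  have "(\<Sum>L<N. exp (- slot_weight t' L)) \<le> (\<Sum>L<N. ?c (L div 2))"
    using exp_neg_slot_weight_le[OF assms] by (intro sum_mono) simp
  also have "\<dots> \<le> (\<Sum>L<2 * N. ?c (L div 2))" by (intro sum_mono2) auto
  also have "\<dots> = 2 * (\<Sum>q<N. ?c q)" by (rule sum_lessThan_double_div2)
  also have "\<dots> \<le> 4 * real t'" using sum_min_one_square_ratio_le[OF assms, of N] by simp
  finally show ?thesis .
qed

lemma sum_shift_le:
  fixes f :: "nat \<Rightarrow> real"
  assumes "\<And>L. f L \<le> 1"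
  shows "(\<Sum>t<N. f (t - d)) \<le> real (min N d) + (\<Sum>L<N - d. f L)"
proof (induction N)
  case (Suc N)
  then show ?case using assms[of "N - d"] by (cases "N < d") (auto simp: Suc_diff_le)
qed simp

lemma suminf_exp_neg_slot_weight_le:
  assumes "1 \<le> t'"
  shows "(\<Sum>t. ennreal (exp (- slot_weight t' (t - d)))) \<le> ennreal (4 * real t' + real d)"
proof (rule suminf_le_const[OF summableI])
  fix N
  have "(\<Sum>t<N. exp (- slot_weight t' (t - d))) \<le> real (min N d) + (\<Sum>L<N - d. exp (- slot_weight t' L))"
    by (rule sum_shift_le) (simp add: slot_weight_nonneg)
  also have "\<dots> \<le> 4 * real t' + real d" using sum_exp_neg_slot_weight_le[OF assms, of "N - d"] by simp
  finally have "(\<Sum>t<N. exp (- slot_weight t' (t - d))) \<le> 4 * real t' + real d" by simp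
  then show "(\<Sum>t<N. ennreal (exp (- slot_weight t' (t - d)))) \<le> ennreal (4 * real t' + real d)"
    by (subst sum_ennreal) (simp_all only: exp_ge_zero ennreal_leI)
qed

section \<open>A convexity bound for sums of exponential tails\<close>

text \<open>w' keeps the first unit of mass of w in the order given by a.\<close>
definition mass_truncation :: "('j \<Rightarrow> nat) \<Rightarrow> 'j set \<Rightarrow> ('j \<Rightarrow> real) \<Rightarrow> ('j \<Rightarrow> real) \<Rightarrow> bool" where
  "mass_truncation a J w w' \<longleftrightarrow> (\<forall>j\<in>J. 0 \<le> w' j \<and> w' j \<le> w j) \<and>
     (\<forall>s. (\<Sum>j\<in>J. if a j \<le> s then w' j else 0) = min (\<Sum>j\<in>J. if a j \<le> s then w j else 0) 1)"

lemma sum_if_le_eq_sum: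
  assumes "\<And>j. j \<in> J \<Longrightarrow> a j \<le> s"
  shows "(\<Sum>j\<in>J. if a j \<le> s then f j else 0) = sum f J"
  using assms by (intro sum.cong) auto

lemma mass_truncation_insert_saturated:
  assumes J: "finite J" "x \<notin> J" and max: "\<And>j. j \<in> J \<Longrightarrow> a j \<le> a x"
    and w: "0 \<le> w x" and full: "1 \<le> sum w J" and trunc: "mass_truncation a J w w'"
  shows "mass_truncation a (insert x J) w (w'(x := 0))"
  unfolding mass_truncation_def
proof (intro conjI ballI allI)
  fix j assume "j \<in> insert x J"
  then show "0 \<le> (w'(x := 0)) j" "(w'(x := 0)) j \<le> w j"
    using trunc w unfolding mass_truncation_def by auto
next
  fix s
  have J_eq: "(\<Sum>j\<in>J. if a j \<le> s then (w'(x := 0)) j else 0) = (\<Sum>j\<in>J. if a j \<le> s then w' j else 0)"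
    using J by (intro sum.cong) auto
  show "(\<Sum>j\<in>insert x J. if a j \<le> s then (w'(x := 0)) j else 0) =
      min (\<Sum>j\<in>insert x J. if a j \<le> s then w j else 0) 1"
  proof (cases "a x \<le> s")
    case True
    then have all: "\<And>j. j \<in> J \<Longrightarrow> a j \<le> s" using max order.trans by blast
    have "sum w' J = (\<Sum>j\<in>J. if a j \<le> s then w' j else 0)" by (rule sum_if_le_eq_sum[OF all, symmetric])
    also have "\<dots> = min (\<Sum>j\<in>J. if a j \<le> s then w j else 0) 1"
      using trunc unfolding mass_truncation_def by blast
    also have "\<dots> = min (sum w J) 1" by (simp add: sum_if_le_eq_sum[OF all])
    finally have "sum w' J = min (sum w J) 1" .
    then show ?thesis
      using J J_eq full w True by (simp add: sum_if_le_eq_sum[OF all])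
  next
    case False
    then show ?thesis using J J_eq trunc unfolding mass_truncation_def by simp
  qed
qed

lemma mass_truncation_insert_saturating:
  assumes J: "finite J" "x \<notin> J" and max: "\<And>j. j \<in> J \<Longrightarrow> a j \<le> a x"
    and w: "\<And>j. j \<in> insert x J \<Longrightarrow> 0 \<le> w j" and below: "sum w J < 1" and full: "1 \<le> sum w (insert x J)"
  shows "mass_truncation a (insert x J) w (w(x := 1 - sum w J))"
  unfolding mass_truncation_def
proof (intro conjI ballI allI)
  fix j assume "j \<in> insert x J"
  then show "0 \<le> (w(x := 1 - sum w J)) j" "(w(x := 1 - sum w J)) j \<le> w j"
    using w below full J by auto
next
  fix s
  have J_eq: "(\<Sum>j\<in>J. if a j \<le> s then (w(x := 1 - sum w J)) j else 0) = (\<Sum>j\<in>J. if a j \<le> s then w j else 0)"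
    using J by (intro sum.cong) auto
  have "(\<Sum>j\<in>J. if a j \<le> s then w j else 0) \<le> sum w J"
    using w by (intro sum_mono) auto
  moreover have "(\<Sum>j\<in>J. if a j \<le> s then f j else 0) = sum f J" if "a x \<le> s" for f :: "'a \<Rightarrow> real"
    using max that by (intro sum_if_le_eq_sum) (blast intro: order.trans)
  ultimately show "(\<Sum>j\<in>insert x J. if a j \<le> s then (w(x := 1 - sum w J)) j else 0) =
      min (\<Sum>j\<in>insert x J. if a j \<le> s then w j else 0) 1"
    using J J_eq below full by (cases "a x \<le> s") auto
qed

lemma exists_mass_truncation:
  assumes "finite J" and "\<And>j. j \<in> J \<Longrightarrow> 0 \<le> w j" and "1 \<le> sum w J"
  shows "\<exists>w'. mass_truncation a J w w'"
  using assms
proof (induction J rule: finite_ranking_induct[where f = a])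
  case (insert x J)
  show ?case
  proof (cases "x \<in> J")
    case True
    then show ?thesis using insert by (simp add: insert_absorb)
  next
    case False
    show ?thesis
    proof (cases "1 \<le> sum w J")
      case True
      then obtain w' where "mass_truncation a J w w'" using insert by auto
      then have "mass_truncation a (insert x J) w (w'(x := 0))"
        using insert False True by (intro mass_truncation_insert_saturated) auto
      then show ?thesis by blast
    next
      case below: False
      then have "mass_truncation a (insert x J) w (w(x := 1 - sum w J))"
        using insert False by (intro mass_truncation_insert_saturating) auto
      then show ?thesis by blast
    qed
  qed
qed simp

lemma mass_truncation_sum:
  assumes "finite J" "1 \<le> sum w J" "mass_truncation a J w w'"
  shows "sum w' J = 1"
proof -
  have "\<And>j. j \<in> J \<Longrightarrow> a j \<le> sum a J" using assms(1) by (intro member_le_sum) auto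
  then have "(\<Sum>j\<in>J. if a j \<le> sum a J then f j else 0) = sum f J" for f :: "'a \<Rightarrow> real"
    by (rule sum_if_le_eq_sum)
  then show ?thesis
    using assms(2,3) unfolding mass_truncation_def by (metis min.absorb2)
qed

lemma mass_truncation_tail:
  assumes "finite J" "1 \<le> sum w J" "mass_truncation a J w w'"
  shows "(\<Sum>j\<in>J. if s < a j then w' j else 0) = max 0 (1 - (\<Sum>j\<in>J. if a j \<le> s then w j else 0))"
proof -
  have "(\<Sum>j\<in>J. if s < a j then w' j else 0) = sum w' J - (\<Sum>j\<in>J. if a j \<le> s then w' j else 0)"
    by (auto simp add: sum_subtractf[symmetric] intro!: sum.cong)
  then show ?thesis
    using mass_truncation_sum[OF assms] assms(3) unfolding mass_truncation_def by (simp add: min_def max_def)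
qed

lemma sum_mult_of_nat_eq_suminf:
  assumes "\<And>j. j \<in> J \<Longrightarrow> 0 \<le> w j"
  shows "(\<Sum>j\<in>J. ennreal (w j * real (a j))) = (\<Sum>s. ennreal (\<Sum>j\<in>J. if s < a j then w j else 0))"
proof -
  have "ennreal (w j * real (a j)) = (\<Sum>s. ennreal (if s < a j then w j else 0))" if "j \<in> J" for j
  proof -
    have "(\<Sum>s. ennreal (if s < a j then w j else 0)) = (\<Sum>s<a j. ennreal (if s < a j then w j else 0))"
      by (rule suminf_finite) auto
    also have "\<dots> = ennreal (w j * real (a j))"
      using assms that by (simp add: ennreal_mult ennreal_of_nat_eq_real_of_nat mult.commute)
    finally show ?thesis ..
  qed
  then have "(\<Sum>j\<in>J. ennreal (w j * real (a j))) = (\<Sum>s. \<Sum>j\<in>J. ennreal (if s < a j then w j else 0))"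
    by (simp add: suminf_sum)
  also have "\<dots> = (\<Sum>s. ennreal (\<Sum>j\<in>J. if s < a j then w j else 0))"
    using assms by (intro suminf_cong sum_ennreal) auto
  finally show ?thesis .
qed

lemma suminf_ennreal_eq_top:
  fixes g :: "nat \<Rightarrow> real"
  assumes "0 < c" "\<And>s. c \<le> g s"
  shows "(\<Sum>s. ennreal (g s)) = top"
proof (rule ccontr)
  assume "(\<Sum>s. ennreal (g s)) \<noteq> top"
  then have "summable g" using assms by (intro summable_suminf_not_top) (auto intro: order.trans[of 0 c])
  then have "g \<longlonglongrightarrow> 0" by (rule summable_LIMSEQ_zero)
  then have "c \<le> 0" using assms(2) by (intro LIMSEQ_le_const) auto
  then show False using assms(1) by simp
qed

lemma ennreal_exp_neg_sum_le_mixture: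
  fixes w w' \<phi> :: "'j \<Rightarrow> real"
  assumes J: "finite J" and w': "\<And>j. j \<in> J \<Longrightarrow> 0 \<le> w' j \<and> w' j \<le> w j" and sum_w': "sum w' J = 1"
    and \<phi>: "\<And>j. j \<in> J \<Longrightarrow> 0 \<le> \<phi> j"
  shows "ennreal (exp (- (\<Sum>j\<in>J. w j * \<phi> j))) \<le> (\<Sum>j\<in>J. ennreal (w' j) * ennreal (exp (- \<phi> j)))"
proof -
  have J_ne: "J \<noteq> {}" using sum_w' by auto
  have "exp (- (\<Sum>j\<in>J. w j * \<phi> j)) \<le> exp (\<Sum>j\<in>J. w' j *\<^sub>R (- \<phi> j))"
    using w' \<phi> by (auto simp: sum_negf intro!: sum_mono mult_right_mono)
  also have "\<dots> \<le> (\<Sum>j\<in>J. w' j * exp (- \<phi> j))"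
    using convex_on_sum[OF J J_ne exp_convex sum_w', of "\<lambda>j. - \<phi> j"] w' by auto
  finally have "ennreal (exp (- (\<Sum>j\<in>J. w j * \<phi> j))) \<le> ennreal (\<Sum>j\<in>J. w' j * exp (- \<phi> j))"
    by (rule ennreal_leI)
  also have "\<dots> = (\<Sum>j\<in>J. ennreal (w' j) * ennreal (exp (- \<phi> j)))"
    using w' by (simp add: sum_ennreal[symmetric] ennreal_mult)
  finally show ?thesis .
qed

text \<open>Jensen's inequality for exp, applied with the truncated weights, turns the tail sum of
  the mixture into the mixture of the tail sums.\<close>
lemma suminf_exp_neg_weighted_le:
  fixes w :: "'j \<Rightarrow> real" and a :: "'j \<Rightarrow> nat" and \<phi> :: "'j \<Rightarrow> nat \<Rightarrow> real"
  assumes J: "finite J" and w: "\<And>j. j \<in> J \<Longrightarrow> 0 \<le> w j" and \<phi>: "\<And>j t. j \<in> J \<Longrightarrow> 0 \<le> \<phi> j t"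
    and tails: "\<And>j. j \<in> J \<Longrightarrow> (\<Sum>t. ennreal (exp (- \<phi> j t))) \<le> ennreal (4 * real (a j))"
  shows "(\<Sum>t. ennreal (exp (- (\<Sum>j\<in>J. w j * \<phi> j t))))
    \<le> 4 * (\<Sum>s. ennreal (max 0 (1 - (\<Sum>j\<in>J. if a j \<le> s then w j else 0))))"
proof (cases "1 \<le> sum w J")
  case False
  have "1 - sum w J \<le> max 0 (1 - (\<Sum>j\<in>J. if a j \<le> s then w j else 0))" for s
  proof -
    have "(\<Sum>j\<in>J. if a j \<le> s then w j else 0) \<le> sum w J" using w by (intro sum_mono) auto
    then show ?thesis by linarith
  qed
  then have "(\<Sum>s. ennreal (max 0 (1 - (\<Sum>j\<in>J. if a j \<le> s then w j else 0)))) = top"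
    using False by (intro suminf_ennreal_eq_top[of "1 - sum w J"]) auto
  then show ?thesis by simp
next
  case True
  obtain w' where w': "mass_truncation a J w w'" using exists_mass_truncation[OF J w True] by blast
  then have w'_nonneg: "\<And>j. j \<in> J \<Longrightarrow> 0 \<le> w' j" and w'_le: "\<And>j. j \<in> J \<Longrightarrow> w' j \<le> w j"
    unfolding mass_truncation_def by auto
  have sum_w': "sum w' J = 1" by (rule mass_truncation_sum[OF J True w'])
  have "(\<Sum>t. ennreal (exp (- (\<Sum>j\<in>J. w j * \<phi> j t)))) \<le> (\<Sum>t. \<Sum>j\<in>J. ennreal (w' j) * ennreal (exp (- \<phi> j t)))"
    using w'_nonneg w'_le sum_w' \<phi> by (intro suminf_le summableI ennreal_exp_neg_sum_le_mixture[OF J]) auto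
  also have "\<dots> = (\<Sum>j\<in>J. ennreal (w' j) * (\<Sum>t. ennreal (exp (- \<phi> j t))))"
    by (simp add: suminf_sum)
  also have "\<dots> \<le> (\<Sum>j\<in>J. ennreal (w' j) * ennreal (4 * real (a j)))"
    by (intro sum_mono mult_left_mono tails) auto
  also have "\<dots> = (\<Sum>j\<in>J. 4 * ennreal (w' j * real (a j)))"
  proof (intro sum.cong refl)
    fix j assume "j \<in> J"
    then have "ennreal (w' j) * ennreal (4 * real (a j)) = ennreal (4 * (w' j * real (a j)))"
      using w'_nonneg by (simp add: ennreal_mult'[symmetric] mult.left_commute)
    then show "ennreal (w' j) * ennreal (4 * real (a j)) = 4 * ennreal (w' j * real (a j))"
      by (simp add: ennreal_mult')
  qed
  also have "\<dots> = 4 * (\<Sum>s. ennreal (\<Sum>j\<in>J. if s < a j then w' j else 0))"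
    by (simp only: sum_distrib_left[symmetric] sum_mult_of_nat_eq_suminf[OF w'_nonneg])
  also have "\<dots> = 4 * (\<Sum>s. ennreal (max 0 (1 - (\<Sum>j\<in>J. if a j \<le> s then w j else 0))))"
    by (simp add: mass_truncation_tail[OF J True w'])
  finally show ?thesis .
qed

section \<open>Integrating against the density e^k\<close>

lemma continuous_on_Min_image:
  fixes f :: "'i \<Rightarrow> real \<Rightarrow> real"
  assumes "finite A" "A \<noteq> {}" "\<And>i. i \<in> A \<Longrightarrow> continuous_on S (f i)"
  shows "continuous_on S (\<lambda>k. Min ((\<lambda>i. f i k) ` A))"
  using assms
proof (induction A rule: finite_ne_induct)
  case (insert x F)
  have "(\<lambda>k. Min ((\<lambda>i. f i k) ` insert x F)) = (\<lambda>k. min (f x k) (Min ((\<lambda>i. f i k) ` F)))"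
    using insert by (simp add: Min_insert)
  then show ?case using insert by (auto intro!: continuous_on_min)
qed simp

text \<open>Away from the finitely many crossings, (e^k envelope k)' = e^k (envelope k + b j) for
  the active line j.\<close>
locale line_envelope =
  fixes A :: "'i set" and a b :: "'i \<Rightarrow> real"
  assumes finite_A: "finite A" and A_ne: "A \<noteq> {}"
    and a_nonneg: "\<And>i. i \<in> A \<Longrightarrow> 0 \<le> a i" and b_nonneg: "\<And>i. i \<in> A \<Longrightarrow> 0 \<le> b i"
begin

definition envelope :: "real \<Rightarrow> real" where
  "envelope k = Min ((\<lambda>i. a i + k * b i) ` A)"

definition active_line :: "real \<Rightarrow> 'i" where
  "active_line k = (SOME j. j \<in> A \<and> envelope k = a j + k * b j)"

definition crossings :: "real set" where
  "crossings = (\<Union>i\<in>A. \<Union>j\<in>A. {k. (a i, b i) \<noteq> (a j, b j) \<and> a i + k * b i = a j + k * b j})"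

lemma envelope_le: "i \<in> A \<Longrightarrow> envelope k \<le> a i + k * b i"
  unfolding envelope_def using finite_A by (intro Min_le) auto

lemma active_line: "active_line k \<in> A" "envelope k = a (active_line k) + k * b (active_line k)"
proof -
  have "envelope k \<in> (\<lambda>i. a i + k * b i) ` A"
    unfolding envelope_def using finite_A A_ne by (intro Min_in) auto
  then have "\<exists>j. j \<in> A \<and> envelope k = a j + k * b j" by auto
  then have "active_line k \<in> A \<and> envelope k = a (active_line k) + k * b (active_line k)"
    unfolding active_line_def by (rule someI_ex)
  then show "active_line k \<in> A" "envelope k = a (active_line k) + k * b (active_line k)" by auto
qed

lemma envelope_nonneg: "0 \<le> k \<Longrightarrow> 0 \<le> envelope k"
  using active_line[of k] a_nonneg b_nonneg by simp

lemma finite_crossings: "finite crossings"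
  unfolding crossings_def
proof (intro finite_UN_I finite_A)
  fix i j assume "i \<in> A" "j \<in> A"
  show "finite {k. (a i, b i) \<noteq> (a j, b j) \<and> a i + k * b i = a j + k * b j}"
  proof (cases "b i = b j")
    case False
    have "{k. (a i, b i) \<noteq> (a j, b j) \<and> a i + k * b i = a j + k * b j} \<subseteq> {(a j - a i) / (b i - b j)}"
      using False by (auto simp: field_simps)
    then show ?thesis by (rule finite_subset) simp
  qed auto
qed

lemma envelope_eq_near:
  assumes "k \<notin> crossings" "j \<in> A" "envelope k = a j + k * b j"
  obtains U where "open U" "k \<in> U" "\<And>y. y \<in> U \<Longrightarrow> envelope y = a j + y * b j"
proof
  define B where "B = {i\<in>A. (a i, b i) \<noteq> (a j, b j)}"
  define U where "U = (\<Inter>i\<in>B. {y. a j + y * b j < a i + y * b i})"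
  show "open U" unfolding U_def B_def using finite_A
    by (intro open_INT) (auto intro!: open_Collect_less continuous_intros)
  have "a j + k * b j < a i + k * b i" if "i \<in> B" for i
  proof -
    have "a j + k * b j \<le> a i + k * b i" using envelope_le[of i k] assms that unfolding B_def by auto
    moreover have "a j + k * b j \<noteq> a i + k * b i"
      using assms that unfolding crossings_def B_def by fastforce
    ultimately show ?thesis by simp
  qed
  then show "k \<in> U" unfolding U_def by auto
  fix y assume "y \<in> U"
  show "envelope y = a j + y * b j"
    unfolding envelope_def
  proof (rule Min_eqI)
    fix z assume "z \<in> (\<lambda>i. a i + y * b i) ` A"
    then obtain i where i: "i \<in> A" "z = a i + y * b i" by auto
    then show "a j + y * b j \<le> z"
      using \<open>y \<in> U\<close> unfolding U_def B_def by (cases "i \<in> B") (auto simp: B_def)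
  qed (use finite_A assms in auto)
qed

lemma has_derivative_exp_envelope:
  assumes "k \<notin> crossings"
  shows "((\<lambda>y. envelope y * exp y) has_real_derivative
          (envelope k + b (active_line k)) * exp k) (at k)"
proof -
  let ?j = "active_line k"
  obtain U where U: "open U" "k \<in> U" "\<And>y. y \<in> U \<Longrightarrow> envelope y = a ?j + y * b ?j"
    using envelope_eq_near[OF assms active_line] by blast
  have "((\<lambda>y. (a ?j + y * b ?j) * exp y) has_real_derivative
          (b ?j * exp k + (a ?j + k * b ?j) * exp k)) (at k)"
    by (auto intro!: derivative_eq_intros)
  then have "((\<lambda>y. (a ?j + y * b ?j) * exp y) has_real_derivative
          (envelope k + b ?j) * exp k) (at k)"
    using active_line(2)[of k] by (simp add: algebra_simps)
  then show ?thesis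
    by (rule has_field_derivative_transform_within_open[OF _ U(1,2)]) (simp add: U(3))
qed

lemma continuous_on_envelope: "continuous_on S envelope"
  unfolding envelope_def using finite_A A_ne
  by (intro continuous_on_Min_image) (auto intro!: continuous_intros)

lemma has_integral_envelope_deriv:
  assumes "0 \<le> r"
  shows "((\<lambda>k. (envelope k + b (active_line k)) * exp k) has_integral
          (envelope r * exp r - envelope 0 * exp 0)) {0..r}"
proof (rule fundamental_theorem_of_calculus_interior_strong[OF finite_crossings assms])
  show "continuous_on {0..r} (\<lambda>k. envelope k * exp k)"
    by (intro continuous_intros continuous_on_envelope)
  fix k assume "k \<in> {0<..<r} - crossings"
  then show "((\<lambda>k. envelope k * exp k) has_vector_derivative (envelope k + b (active_line k)) * exp k) (at k)"
    using has_derivative_exp_envelope by (simp add: has_real_derivative_iff_has_vector_derivative)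
qed

lemma nn_integral_exp_density_le:
  fixes C :: "real \<Rightarrow> real"
  assumes r: "0 \<le> r" and Z: "0 < Z" and C_nonneg: "\<And>k. 0 \<le> C k"
    and C: "\<And>k j. 0 \<le> k \<Longrightarrow> k \<le> r \<Longrightarrow> j \<in> A \<Longrightarrow> (\<forall>i\<in>A. a j + k * b j \<le> a i + k * b i) \<Longrightarrow>
              C k \<le> a j + k * b j + b j"
  shows "(\<integral>\<^sup>+ k. indicator {0..r} k * ennreal (exp k / Z) * ennreal (C k) \<partial>lborel)
          \<le> ennreal (exp r / Z * envelope r)"
proof -
  let ?D = "\<lambda>k. (envelope k + b (active_line k)) * exp k"
  have D_nonneg: "0 \<le> ?D k" if "0 \<le> k" for k
    using that envelope_nonneg[of k] b_nonneg[OF active_line(1)] by simp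
  have "(\<integral>\<^sup>+ k. indicator {0..r} k * ennreal (exp k / Z) * ennreal (C k) \<partial>lborel)
      \<le> (\<integral>\<^sup>+ k. ennreal (indicator {0..r} k * (?D k / Z)) \<partial>lborel)"
  proof (intro nn_integral_mono)
    fix k :: real
    show "indicator {0..r} k * ennreal (exp k / Z) * ennreal (C k) \<le> ennreal (indicator {0..r} k * (?D k / Z))"
    proof (cases "k \<in> {0..r}")
      case True
      have "C k \<le> envelope k + b (active_line k)"
        using C[of k "active_line k"] True active_line[of k] envelope_le[of _ k] by auto
      then have "C k * exp k \<le> ?D k" by (rule mult_right_mono) simp
      then have "exp k / Z * C k \<le> ?D k / Z"
        using Z by (simp add: field_simps)
      then show ?thesis using True Z C_nonneg[of k] by (simp add: ennreal_mult[symmetric] ennreal_leI)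
    qed simp
  qed
  also have "\<dots> = ennreal ((envelope r * exp r - envelope 0 * exp 0) / Z)"
    using has_integral_divide[OF has_integral_envelope_deriv[OF r], of Z] D_nonneg Z
    by (intro nn_integral_has_integral_lebesgue) auto
  also have "\<dots> \<le> ennreal (exp r / Z * envelope r)"
    using Z envelope_nonneg[of 0] by (intro ennreal_leI) (simp add: divide_right_mono field_simps)
  finally show ?thesis .
qed

end

section \<open>Cost of delayed activation for fixed arrival times\<close>

definition distinct_arrivals :: "(nat \<Rightarrow> enat) \<Rightarrow> bool" where
  "distinct_arrivals \<alpha> \<longleftrightarrow> (\<forall>i m. \<alpha> i = enat m \<longrightarrow> 1 \<le> m) \<and> (\<forall>i l. \<alpha> i = \<alpha> l \<longrightarrow> \<alpha> i \<noteq> \<infinity> \<longrightarrow> i = l)"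

lemma distinct_arrivalsD:
  assumes "distinct_arrivals \<alpha>"
  shows "\<alpha> i = enat m \<Longrightarrow> 1 \<le> m" and "\<alpha> i = \<alpha> l \<Longrightarrow> \<alpha> i \<noteq> \<infinity> \<Longrightarrow> i = l"
  using assms unfolding distinct_arrivals_def by auto

lemma card_opened_before_lt:
  assumes \<alpha>: "distinct_arrivals \<alpha>" and j: "j < n" "\<alpha> j = enat aj"
  shows "card {l. l < n \<and> (\<alpha> l < \<alpha> j \<or> (\<alpha> l = \<alpha> j \<and> l < j))} < min aj n"
proof -
  let ?B = "{l. l < n \<and> \<alpha> l < \<alpha> j}"
  have B: "{l. l < n \<and> (\<alpha> l < \<alpha> j \<or> (\<alpha> l = \<alpha> j \<and> l < j))} = ?B"
  proof -
    have "l = j" if "\<alpha> l = \<alpha> j" for l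
      using distinct_arrivalsD(2)[OF \<alpha> that] that j by simp
    then show ?thesis by (auto dest: sym)
  qed
  have "card ?B \<le> card ({..<n} - {j})" by (intro card_mono) auto
  also have "\<dots> < n" using j by simp
  finally have "card ?B < n" .
  moreover have "card ?B < aj"
  proof -
    have finite: "\<alpha> l = enat (the_enat (\<alpha> l))" if "l \<in> ?B" for l
      using that j by (cases "\<alpha> l") auto
    have "inj_on (\<lambda>l. the_enat (\<alpha> l)) ?B"
    proof (rule inj_onI)
      fix l l' assume l: "l \<in> ?B" and l': "l' \<in> ?B" and "the_enat (\<alpha> l) = the_enat (\<alpha> l')"
      then have "\<alpha> l = \<alpha> l'" using finite[OF l] finite[OF l'] by simp
      moreover have "\<alpha> l \<noteq> \<infinity>" using finite[OF l] by (cases "\<alpha> l") auto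
      ultimately show "l = l'" by (rule distinct_arrivalsD(2)[OF \<alpha>])
    qed
    then have "card ?B = card ((\<lambda>l. the_enat (\<alpha> l)) ` ?B)" by (simp add: card_image)
    also have "\<dots> \<le> card {1..<aj}"
    proof (intro card_mono subsetI)
      fix y assume "y \<in> (\<lambda>l. the_enat (\<alpha> l)) ` ?B"
      then obtain l where l: "l \<in> ?B" and "\<alpha> l = enat y" using finite by auto
      then have "1 \<le> y" using distinct_arrivalsD(1)[OF \<alpha>] by blast
      moreover have "y < aj" using l \<open>\<alpha> l = enat y\<close> j by simp
      ultimately show "y \<in> {1..<aj}" by simp
    qed simp
    also have "\<dots> < aj" using distinct_arrivalsD(1)[OF \<alpha> j(2)] by simp
    finally show ?thesis .
  qed
  ultimately show ?thesis using B by simp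
qed

text \<open>If box j minimizes a_i + k v_i, the algorithm stops by time a_j + \<lfloor>k v_j\<rfloor>, having
  opened box j, so it pays at most a_j + k v_j + v_j.\<close>
lemma da_cost_le_min_line:
  fixes \<alpha> :: "nat \<Rightarrow> enat" and v :: "nat \<Rightarrow> nat"
  assumes \<alpha>: "distinct_arrivals \<alpha>" and j: "j < n" "\<alpha> j = enat aj" and k: "0 \<le> k"
    and min_j: "\<And>i ai. i < n \<Longrightarrow> \<alpha> i = enat ai \<Longrightarrow> real aj + k * real (v j) \<le> real ai + k * real (v i)"
  shows "real (da_cost n k \<alpha> v) \<le> real aj + k * real (v j) + real (v j)"
proof -
  define d where "d i = nat \<lfloor>k * real (v i)\<rfloor>" for i
  have d_le: "real (d i) \<le> k * real (v i)" for i
    using k unfolding d_def by simp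
  have T: "Min ((\<lambda>i. \<alpha> i + enat (d i)) ` {..<n}) = enat (aj + d j)"
  proof (rule Min_eqI)
    fix y assume "y \<in> (\<lambda>i. \<alpha> i + enat (d i)) ` {..<n}"
    then obtain i where i: "i < n" "y = \<alpha> i + enat (d i)" by auto
    show "enat (aj + d j) \<le> y"
    proof (cases "\<alpha> i")
      case (enat ai)
      have "k * real (v i) < real (d i) + 1" using k unfolding d_def by linarith
      then have "real aj + real (d j) < real ai + real (d i) + 1"
        using min_j[OF i(1) enat] d_le[of j] by linarith
      then show ?thesis using i enat by simp
    qed (use i in simp)
  qed (use j in \<open>auto intro!: image_eqI[of _ _ j]\<close>)
  define m where "m = min (aj + d j) n"
  define S where "S = {i. i < n \<and> card {l. l < n \<and> (\<alpha> l < \<alpha> i \<or> (\<alpha> l = \<alpha> i \<and> l < i))} < m}"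
  have "j \<in> S"
    using card_opened_before_lt[OF \<alpha> j] j unfolding S_def m_def by auto
  then have "Min (v ` S) \<le> v j" by (intro Min_le) (auto simp: S_def)
  moreover have "da_cost n k \<alpha> v = m + Min (v ` S)"
    unfolding da_cost_def Let_def d_def[symmetric] T m_def S_def by simp
  ultimately have "da_cost n k \<alpha> v \<le> aj + d j + v j" unfolding m_def by linarith
  then show ?thesis using d_le[of j] by linarith
qed

lemma nn_integral_da_cost_le:
  fixes \<alpha> :: "nat \<Rightarrow> enat" and v :: "nat \<Rightarrow> nat"
  assumes \<alpha>: "distinct_arrivals \<alpha>" and n: "1 \<le> n"
  shows "(\<integral>\<^sup>+ k. indicator {0..4} k * ennreal (exp k / (exp 4 - 1)) * ennreal (real (da_cost n k \<alpha> v)) \<partial>lborel)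
     \<le> ennreal (exp 4 / (exp 4 - 1)) * ennreal_of_enat (Min ((\<lambda>i. \<alpha> i + enat (4 * v i)) ` {..<n}))"
proof -
  have Z: "0 < exp 4 - (1::real)" by simp
  have "Min ((\<lambda>i. \<alpha> i + enat (4 * v i)) ` {..<n}) \<in> (\<lambda>i. \<alpha> i + enat (4 * v i)) ` {..<n}"
    using n by (intro Min_in) (auto simp: lessThan_empty_iff)
  then obtain i where i: "i < n" "Min ((\<lambda>i. \<alpha> i + enat (4 * v i)) ` {..<n}) = \<alpha> i + enat (4 * v i)"
    by auto
  show ?thesis
  proof (cases "\<alpha> i")
    case infinity
    then show ?thesis using i Z by (simp add: ennreal_mult_top)
  next
    case (enat ai)
    define A where "A = {i. i < n \<and> \<alpha> i \<noteq> \<infinity>}"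
    interpret line_envelope A "\<lambda>i. real (the_enat (\<alpha> i))" "\<lambda>i. real (v i)"
      using i enat by unfold_locales (auto simp: A_def)
    have "(\<integral>\<^sup>+ k. indicator {0..4} k * ennreal (exp k / (exp 4 - 1)) * ennreal (real (da_cost n k \<alpha> v)) \<partial>lborel)
        \<le> ennreal (exp 4 / (exp 4 - 1) * envelope 4)"
    proof (rule nn_integral_exp_density_le[OF _ Z])
      fix k j assume k: "0 \<le> k" and "j \<in> A"
        and "\<forall>i\<in>A. real (the_enat (\<alpha> j)) + k * real (v j) \<le> real (the_enat (\<alpha> i)) + k * real (v i)"
      then show "real (da_cost n k \<alpha> v) \<le> real (the_enat (\<alpha> j)) + k * real (v j) + real (v j)"
        by (intro da_cost_le_min_line[OF \<alpha>]) (auto simp: A_def)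
    qed auto
    also have "\<dots> \<le> ennreal (exp 4 / (exp 4 - 1) * (real ai + 4 * real (v i)))"
      using envelope_le[of i 4] i enat Z by (intro ennreal_leI mult_left_mono) (auto simp: A_def)
    also have "\<dots> = ennreal (exp 4 / (exp 4 - 1)) * ennreal (real ai + 4 * real (v i))"
      using Z by (intro ennreal_mult) auto
    also have "ennreal (real ai + 4 * real (v i)) = ennreal_of_enat (\<alpha> i + enat (4 * v i))"
      unfolding enat by (simp only: plus_enat_simps ennreal_of_enat_enat ennreal_of_nat_eq_real_of_nat
          of_nat_add of_nat_mult of_nat_numeral)
    finally show ?thesis using i by simp
  qed
qed

section \<open>The convex program bounds OPT from below\<close>

definition cp_cost :: "nat \<Rightarrow> (nat \<Rightarrow> nat \<Rightarrow> real) \<Rightarrow> (nat \<Rightarrow> nat) \<Rightarrow> ennreal" where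
  "cp_cost n x v = (\<Sum>s. (let t = Suc s in
     ennreal (max 0 (1 - (\<Sum>i<n. \<Sum>t'\<in>{t'\<in>{1..n}. real t' < real t - real (v i)}. x i t')))))"

lemma cp_obj_eq: "cp_obj n D x = (\<integral>\<^sup>+ v. cp_cost n x v \<partial>measure_pmf D)"
  unfolding cp_obj_def cp_cost_def ..

definition order_solution :: "nat \<Rightarrow> (nat \<Rightarrow> nat) \<Rightarrow> nat \<Rightarrow> nat \<Rightarrow> real" where
  "order_solution n \<sigma> i t = (if 1 \<le> t \<and> t \<le> n \<and> \<sigma> (t - 1) = i then 1 else 0)"

lemma cp_feasible_order_solution: "cp_feasible n (order_solution n \<sigma>)"
  unfolding cp_feasible_def
proof (intro conjI ballI allI impI)
  fix t :: nat assume t: "t \<in> {1..n}"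
  have "(\<Sum>i<n. order_solution n \<sigma> i t) = (\<Sum>i<n. if \<sigma> (t - 1) = i then 1 else 0)"
    using t unfolding order_solution_def by (intro sum.cong) auto
  also have "\<dots> \<le> 1" by (simp add: sum.delta)
  finally show "(\<Sum>i<n. order_solution n \<sigma> i t) \<le> 1" .
qed (simp add: order_solution_def)

lemma pa_stop_time_bounds:
  assumes "1 \<le> n"
  shows "1 \<le> pa_stop_time n \<sigma> stop v" "pa_stop_time n \<sigma> stop v \<le> n"
proof -
  let ?P = "\<lambda>t. 1 \<le> t \<and> (stop (map (\<lambda>j. v (\<sigma> j)) [0..<t]) \<or> t = n)"
  have "?P n" using assms by simp
  then show "1 \<le> pa_stop_time n \<sigma> stop v" "pa_stop_time n \<sigma> stop v \<le> n"
    unfolding pa_stop_time_def using LeastI[of ?P] Least_le[of ?P] by auto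
qed

text \<open>Once the box of minimum opened volume, opened at time p + 1, has waited out its volume,
  the order solution has covered the whole unit of mass.\<close>
lemma cp_cost_order_solution_le:
  assumes n: "1 \<le> n" and \<sigma>: "bij_betw \<sigma> {..<n} {..<n}"
  shows "cp_cost n (order_solution n \<sigma>) v \<le> ennreal (real (pa_cost n \<sigma> stop v))"
proof -
  let ?y = "order_solution n \<sigma>"
  let ?mass = "\<lambda>s. \<Sum>i<n. \<Sum>t'\<in>{t'\<in>{1..n}. real t' < real (Suc s) - real (v i)}. ?y i t'"
  define st where "st = pa_stop_time n \<sigma> stop v"
  have st: "1 \<le> st" "st \<le> n" using pa_stop_time_bounds[OF n] unfolding st_def by auto
  have "Min ((\<lambda>j. v (\<sigma> j)) ` {..<st}) \<in> (\<lambda>j. v (\<sigma> j)) ` {..<st}"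
    using st by (intro Min_in) (auto simp: lessThan_empty_iff)
  then obtain p where p: "p < st" "Min ((\<lambda>j. v (\<sigma> j)) ` {..<st}) = v (\<sigma> p)" by auto
  define M where "M = p + 1 + v (\<sigma> p)"
  have term_le: "ennreal (max 0 (1 - ?mass s)) \<le> ennreal (if s < M then 1 else 0)" for s
  proof (cases "s < M")
    case True
    have "0 \<le> ?mass s" unfolding order_solution_def by (intro sum_nonneg) auto
    then show ?thesis using True by simp
  next
    case False
    have "\<sigma> p < n" using \<sigma> p st by (auto simp: bij_betw_def)
    have mem: "p + 1 \<in> {t'\<in>{1..n}. real t' < real (Suc s) - real (v (\<sigma> p))}"
      using False p st unfolding M_def by auto
    have "1 = ?y (\<sigma> p) (p + 1)" unfolding order_solution_def using p st by simp
    also have "\<dots> \<le> (\<Sum>t'\<in>{t'\<in>{1..n}. real t' < real (Suc s) - real (v (\<sigma> p))}. ?y (\<sigma> p) t')"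
      using mem by (intro member_le_sum) (auto simp: order_solution_def)
    also have "\<dots> \<le> ?mass s"
      using \<open>\<sigma> p < n\<close>
      by (intro member_le_sum[where f = "\<lambda>i. \<Sum>t'\<in>{t'\<in>{1..n}. real t' < real (Suc s) - real (v i)}. ?y i t'"])
        (auto simp: order_solution_def intro!: sum_nonneg)
    finally show ?thesis using False by simp
  qed
  have "cp_cost n ?y v \<le> (\<Sum>s. ennreal (if s < M then 1 else 0))"
    unfolding cp_cost_def Let_def by (intro suminf_le summableI term_le)
  also have "\<dots> = ennreal (real M)"
    by (subst suminf_finite[of "{..<M}"]) (auto simp: ennreal_of_nat_eq_real_of_nat)
  also have "\<dots> \<le> ennreal (real (pa_cost n \<sigma> stop v))"
    using p unfolding pa_cost_def st_def[symmetric] M_def by (intro ennreal_leI) simp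
  finally show ?thesis .
qed

lemma cp_obj_le_OPT:
  assumes n: "1 \<le> n" and opt: "cp_optimal n D x"
  shows "cp_obj n D x \<le> OPT n D"
  unfolding OPT_def
proof (rule INF_greatest, clarify)
  fix \<sigma> :: "nat \<Rightarrow> nat" and stop :: "nat list \<Rightarrow> bool" assume \<sigma>: "bij_betw \<sigma> {..<n} {..<n}"
  have "cp_obj n D x \<le> cp_obj n D (order_solution n \<sigma>)"
    using opt cp_feasible_order_solution unfolding cp_optimal_def by blast
  also have "\<dots> \<le> (\<integral>\<^sup>+ v. ennreal (real (pa_cost n \<sigma> stop v)) \<partial>measure_pmf D)"
    unfolding cp_obj_eq by (intro nn_integral_mono cp_cost_order_solution_le[OF n \<sigma>])
  finally show "cp_obj n D x \<le> (\<integral>\<^sup>+ v. ennreal (real (pa_cost n (fst (\<sigma>, stop)) (snd (\<sigma>, stop)) v)) \<partial>measure_pmf D)"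
    by simp
qed

section \<open>Arrival times and measurability\<close>

lemma space_poisson_space [simp]: "space (poisson_space n x) = UNIV"
  unfolding poisson_space_def by (simp add: space_PiM PiE_UNIV_domain)

lemma measurable_poisson_component [measurable]:
  "(\<lambda>\<omega>. \<omega> \<tau>) \<in> measurable (poisson_space n x) (count_space UNIV)"
proof -
  have "(\<lambda>\<omega>. \<omega> \<tau>) \<in> measurable (poisson_space n x) (measure_pmf (draw_pmf n x \<tau>))"
    unfolding poisson_space_def by (rule measurable_component_singleton) simp
  then show ?thesis by simp
qed

lemma arrival_eq_enat_iff:
  "arrival \<omega> i = enat m \<longleftrightarrow> 1 \<le> m \<and> \<omega> m = Some i \<and> (\<forall>\<tau>. 1 \<le> \<tau> \<and> \<tau> < m \<longrightarrow> \<omega> \<tau> \<noteq> Some i)"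
proof
  assume a: "arrival \<omega> i = enat m"
  then have ex: "\<exists>\<tau>\<ge>1. \<omega> \<tau> = Some i" unfolding arrival_def by (auto split: if_splits)
  then have m: "m = (LEAST \<tau>. 1 \<le> \<tau> \<and> \<omega> \<tau> = Some i)" using a unfolding arrival_def by auto
  show "1 \<le> m \<and> \<omega> m = Some i \<and> (\<forall>\<tau>. 1 \<le> \<tau> \<and> \<tau> < m \<longrightarrow> \<omega> \<tau> \<noteq> Some i)"
    unfolding m using ex LeastI_ex[of "\<lambda>\<tau>. 1 \<le> \<tau> \<and> \<omega> \<tau> = Some i"] not_less_Least by blast
next
  assume r: "1 \<le> m \<and> \<omega> m = Some i \<and> (\<forall>\<tau>. 1 \<le> \<tau> \<and> \<tau> < m \<longrightarrow> \<omega> \<tau> \<noteq> Some i)"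
  then have "(LEAST \<tau>. 1 \<le> \<tau> \<and> \<omega> \<tau> = Some i) = m"
    by (intro Least_equality) (auto simp: not_less[symmetric])
  then show "arrival \<omega> i = enat m" using r unfolding arrival_def by auto
qed

lemma arrival_eq_infinity_iff: "arrival \<omega> i = \<infinity> \<longleftrightarrow> (\<forall>\<tau>. 1 \<le> \<tau> \<longrightarrow> \<omega> \<tau> \<noteq> Some i)"
  unfolding arrival_def by auto

lemma distinct_arrivals_arrival: "distinct_arrivals (arrival \<omega>)"
  unfolding distinct_arrivals_def
proof (intro conjI allI impI)
  fix i l assume eq: "arrival \<omega> i = arrival \<omega> l" and "arrival \<omega> i \<noteq> \<infinity>"
  then obtain m where m: "arrival \<omega> i = enat m" by (cases "arrival \<omega> i") auto
  then have "\<omega> m = Some i" by (simp add: arrival_eq_enat_iff)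
  moreover have "\<omega> m = Some l" using m eq by (simp add: arrival_eq_enat_iff)
  ultimately show "i = l" by simp
qed (simp add: arrival_eq_enat_iff)

lemma arrival_plus_le_iff:
  "arrival \<omega> i + enat c \<le> enat t \<longleftrightarrow> (\<exists>\<tau>. 1 \<le> \<tau> \<and> \<omega> \<tau> = Some i \<and> \<tau> + c \<le> t)"
proof
  assume a: "arrival \<omega> i + enat c \<le> enat t"
  then obtain m where m: "arrival \<omega> i = enat m" by (cases "arrival \<omega> i") auto
  then have "m + c \<le> t" using a by simp
  moreover have "1 \<le> m \<and> \<omega> m = Some i" using m by (simp add: arrival_eq_enat_iff)
  ultimately show "\<exists>\<tau>. 1 \<le> \<tau> \<and> \<omega> \<tau> = Some i \<and> \<tau> + c \<le> t" by blast
next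
  assume "\<exists>\<tau>. 1 \<le> \<tau> \<and> \<omega> \<tau> = Some i \<and> \<tau> + c \<le> t"
  then obtain \<tau> where \<tau>: "1 \<le> \<tau>" "\<omega> \<tau> = Some i" "\<tau> + c \<le> t" by auto
  then have "(LEAST \<tau>. 1 \<le> \<tau> \<and> \<omega> \<tau> = Some i) \<le> \<tau>" by (intro Least_le) auto
  then show "arrival \<omega> i + enat c \<le> enat t" using \<tau> unfolding arrival_def by auto
qed

lemma measurable_arrival [measurable]:
  "(\<lambda>\<omega>. arrival \<omega> i) \<in> measurable (poisson_space n x) (count_space UNIV)"
proof (subst measurable_count_space_eq2_countable, intro conjI ballI)
  fix a :: enat
  show "(\<lambda>\<omega>. arrival \<omega> i) -` {a} \<inter> space (poisson_space n x) \<in> sets (poisson_space n x)"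
  proof (cases a)
    case (enat m)
    have "(\<lambda>\<omega>. arrival \<omega> i) -` {a} \<inter> space (poisson_space n x) =
      {\<omega> \<in> space (poisson_space n x). 1 \<le> m \<and> \<omega> m = Some i \<and> (\<forall>\<tau>. 1 \<le> \<tau> \<and> \<tau> < m \<longrightarrow> \<omega> \<tau> \<noteq> Some i)}"
      using enat by (auto simp: arrival_eq_enat_iff)
    also have "\<dots> \<in> sets (poisson_space n x)" by measurable
    finally show ?thesis .
  next
    case infinity
    have "(\<lambda>\<omega>. arrival \<omega> i) -` {a} \<inter> space (poisson_space n x) =
      {\<omega> \<in> space (poisson_space n x). \<forall>\<tau>. 1 \<le> \<tau> \<longrightarrow> \<omega> \<tau> \<noteq> Some i}"
      using infinity by (auto simp: arrival_eq_infinity_iff)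
    also have "\<dots> \<in> sets (poisson_space n x)" by measurable
    finally show ?thesis .
  qed
qed simp

lemma measurable_factor_countable:
  fixes L :: "'a \<Rightarrow> 'c::countable"
  assumes L: "L \<in> measurable M (count_space UNIV)" and N: "space N = UNIV"
    and F: "\<And>x y. x \<in> space M \<Longrightarrow> y \<in> space M \<Longrightarrow> L x = L y \<Longrightarrow> F x = F y"
  shows "F \<in> measurable M N"
proof -
  define G where "G c = F (SOME x. x \<in> space M \<and> L x = c)" for c
  have "F x = G (L x)" if "x \<in> space M" for x
  proof -
    define y where "y = (SOME y. y \<in> space M \<and> L y = L x)"
    have "y \<in> space M \<and> L y = L x" unfolding y_def by (rule someI_ex) (use that in blast)
    then show ?thesis unfolding G_def y_def[symmetric] using F[OF that, of y] by simp
  qed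
  moreover have "(\<lambda>x. G (L x)) \<in> measurable M N"
    using measurable_compose[OF L, of G N] N by simp
  ultimately show ?thesis by (rule measurable_cong[THEN iffD2])
qed

lemma measurable_map_list:
  fixes f :: "'b \<Rightarrow> 'a \<Rightarrow> 'c::countable"
  assumes "\<And>y. y \<in> set ys \<Longrightarrow> (\<lambda>x. f x y) \<in> measurable M (count_space UNIV)"
  shows "(\<lambda>x. map (f x) ys) \<in> measurable M (count_space UNIV)"
  using assms
proof (induction ys)
  case (Cons y ys)
  have IH: "(\<lambda>x. map (f x) ys) \<in> measurable M (count_space UNIV)" using Cons by simp
  have g: "(\<lambda>x. f x y) \<in> measurable M (count_space UNIV)" using Cons by simp
  have "(\<lambda>x. (\<lambda>c x. c # map (f x) ys) (f x y) x) \<in> measurable M (count_space UNIV)"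
  proof (rule measurable_compose_countable[OF _ g])
    fix c :: 'c
    show "(\<lambda>x. c # map (f x) ys) \<in> measurable M (count_space UNIV)"
      using measurable_compose[OF IH, of "Cons c" "count_space UNIV"] by simp
  qed
  then show ?case by simp
qed simp

lemma measurable_Pair_count_space:
  fixes f :: "'a \<Rightarrow> 'b::countable" and g :: "'a \<Rightarrow> 'c::countable"
  assumes "f \<in> measurable M (count_space UNIV)" "g \<in> measurable M (count_space UNIV)"
  shows "(\<lambda>x. (f x, g x)) \<in> measurable M (count_space UNIV)"
  using measurable_Pair[OF assms] by (simp add: pair_measure_countable)

lemma measurable_arrival_list:
  assumes "W \<in> measurable M (poisson_space n x)"
  shows "(\<lambda>p. map (arrival (W p)) [0..<m]) \<in> measurable M (count_space UNIV)"
  using measurable_compose[OF assms measurable_arrival] by (intro measurable_map_list) simp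

lemma measurable_volume_list:
  assumes "V \<in> measurable M (measure_pmf D)"
  shows "(\<lambda>p. map (V p) [0..<m]) \<in> measurable M (count_space UNIV)"
  using measurable_compose[OF assms, of "\<lambda>v. map v [0..<m]" "count_space UNIV"] by simp

lemma da_cost_cong:
  assumes "\<And>i. i < n \<Longrightarrow> nat \<lfloor>k * real (v i)\<rfloor> = nat \<lfloor>k' * real (v' i)\<rfloor>"
    and "\<And>i. i < n \<Longrightarrow> \<alpha> i = \<alpha>' i" and "\<And>i. i < n \<Longrightarrow> v i = v' i"
  shows "da_cost n k \<alpha> v = da_cost n k' \<alpha>' v'"
proof -
  have "(\<lambda>i. \<alpha> i + enat (nat \<lfloor>k * real (v i)\<rfloor>)) ` {..<n} = (\<lambda>i. \<alpha>' i + enat (nat \<lfloor>k' * real (v' i)\<rfloor>)) ` {..<n}"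
    using assms by (intro image_cong) auto
  moreover have "{i. i < n \<and> card {j. j < n \<and> (\<alpha> j < \<alpha> i \<or> (\<alpha> j = \<alpha> i \<and> j < i))} < m} =
      {i. i < n \<and> card {j. j < n \<and> (\<alpha>' j < \<alpha>' i \<or> (\<alpha>' j = \<alpha>' i \<and> j < i))} < m}" for m
    using assms(2) by (intro Collect_cong conj_cong refl arg_cong2[where f = less] arg_cong[where f = card]) auto
  moreover have "v ` {i. i < n \<and> P i} = v' ` {i. i < n \<and> P i}" for P
    using assms(3) by (intro image_cong) auto
  ultimately show ?thesis unfolding da_cost_def Let_def by simp
qed

lemma measurable_da_cost:
  assumes K: "K \<in> borel_measurable M" and W: "W \<in> measurable M (poisson_space n x)"
    and V: "V \<in> measurable M (measure_pmf D)"
  shows "(\<lambda>p. ennreal (real (da_cost n (K p) (arrival (W p)) (V p)))) \<in> borel_measurable M"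
proof (rule measurable_factor_countable)
  have delays: "(\<lambda>p. map (\<lambda>i. nat \<lfloor>K p * real (V p i)\<rfloor>) [0..<n]) \<in> measurable M (count_space UNIV)"
  proof (rule measurable_map_list)
    fix i
    show "(\<lambda>p. nat \<lfloor>K p * real (V p i)\<rfloor>) \<in> measurable M (count_space UNIV)"
    proof (rule measurable_compose_countable[where f = "\<lambda>c p. nat \<lfloor>K p * real c\<rfloor>"])
      show "(\<lambda>p. V p i) \<in> measurable M (count_space UNIV)"
        using measurable_compose[OF V, of "\<lambda>v. v i" "count_space UNIV"] by simp
      have "(\<lambda>k. nat \<lfloor>k * real c\<rfloor>) \<in> measurable borel (count_space UNIV)" for c :: nat
        by measurable
      then show "(\<lambda>p. nat \<lfloor>K p * real c\<rfloor>) \<in> measurable M (count_space UNIV)" for c :: nat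
        by (rule measurable_compose[OF K])
    qed
  qed
  show "(\<lambda>p. (map (\<lambda>i. nat \<lfloor>K p * real (V p i)\<rfloor>) [0..<n], map (arrival (W p)) [0..<n], map (V p) [0..<n]))
      \<in> measurable M (count_space UNIV)"
    by (intro measurable_Pair_count_space delays measurable_arrival_list[OF W] measurable_volume_list[OF V])
  fix p q
  assume "(map (\<lambda>i. nat \<lfloor>K p * real (V p i)\<rfloor>) [0..<n], map (arrival (W p)) [0..<n], map (V p) [0..<n]) =
    (map (\<lambda>i. nat \<lfloor>K q * real (V q i)\<rfloor>) [0..<n], map (arrival (W q)) [0..<n], map (V q) [0..<n])"
  then have "da_cost n (K p) (arrival (W p)) (V p) = da_cost n (K q) (arrival (W q)) (V q)"
    by (intro da_cost_cong) (auto simp: map_eq_conv)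
  then show "ennreal (real (da_cost n (K p) (arrival (W p)) (V p))) = ennreal (real (da_cost n (K q) (arrival (W q)) (V q)))"
    by simp
qed simp

section \<open>The activation time under Poisson rounding\<close>

text \<open>The time at which 4-delayed activation would stop if it were not cut off after n boxes.\<close>
definition activation_time :: "nat \<Rightarrow> (nat \<Rightarrow> nat) \<Rightarrow> (nat \<Rightarrow> nat option) \<Rightarrow> enat" where
  "activation_time n v \<omega> = Min ((\<lambda>i. arrival \<omega> i + enat (4 * v i)) ` {..<n})"

lemma measurable_activation_time:
  assumes W: "W \<in> measurable M (poisson_space n x)" and V: "V \<in> measurable M (measure_pmf D)"
  shows "(\<lambda>p. activation_time n (V p) (W p)) \<in> measurable M (count_space UNIV)"
proof (rule measurable_factor_countable)
  show "(\<lambda>p. (map (arrival (W p)) [0..<n], map (V p) [0..<n])) \<in> measurable M (count_space UNIV)"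
    by (intro measurable_Pair_count_space measurable_arrival_list[OF W] measurable_volume_list[OF V])
  fix p q
  assume "(map (arrival (W p)) [0..<n], map (V p) [0..<n]) = (map (arrival (W q)) [0..<n], map (V q) [0..<n])"
  then show "activation_time n (V p) (W p) = activation_time n (V q) (W q)"
    unfolding activation_time_def by (intro arg_cong[where f = Min] image_cong) (auto simp: map_eq_conv)
qed simp

lemma xbar_nonneg: "cp_feasible n x \<Longrightarrow> i < n \<Longrightarrow> 0 \<le> xbar n x i u"
  unfolding xbar_def cp_feasible_def by (auto intro!: divide_nonneg_nonneg sum_nonneg)

lemma sum_xbar_le_one:
  assumes "cp_feasible n x"
  shows "(\<Sum>i<n. xbar n x i u) \<le> 1"
proof (cases "u = 0")
  case False
  have "(\<Sum>i<n. xbar n x i u) = (1 / real u) * (\<Sum>t'\<in>{1..min u n}. \<Sum>i<n. x i t')"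
    unfolding xbar_def by (simp add: sum_distrib_left sum.swap[of _ "{..<n}"])
  also have "\<dots> \<le> (1 / real u) * (\<Sum>t'\<in>{1..min u n}. 1)"
    using assms unfolding cp_feasible_def by (intro mult_left_mono sum_mono) auto
  also have "\<dots> \<le> 1" using False by (simp add: divide_le_eq_1)
  finally show ?thesis .
qed (simp add: xbar_def)

lemma pmf_draw_pmf:
  assumes feas: "cp_feasible n x"
  shows "pmf (draw_pmf n x \<tau>) (Some i) = (if i < n then xbar n x i ((\<tau> + 1) div 2) else 0)"
  unfolding draw_pmf_def
proof (subst pmf_embed_pmf)
  let ?f = "\<lambda>d. case d of None \<Rightarrow> 1 - (\<Sum>i<n. xbar n x i ((\<tau> + 1) div 2))
     | Some i \<Rightarrow> (if i < n then xbar n x i ((\<tau> + 1) div 2) else 0)"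
  show "0 \<le> ?f d" for d
    using sum_xbar_le_one[OF feas] xbar_nonneg[OF feas] by (cases d) auto
  have "(\<integral>\<^sup>+ d. ennreal (?f d) \<partial>count_space UNIV) = (\<Sum>d\<in>insert None (Some ` {..<n}). ennreal (?f d))"
    by (rule nn_integral_count_space') auto
  also have "\<dots> = ennreal (?f None + (\<Sum>i<n. ?f (Some i)))"
    using sum_xbar_le_one[OF feas] xbar_nonneg[OF feas]
    by (subst sum_ennreal) (auto simp: sum.reindex split: option.splits)
  finally show "(\<integral>\<^sup>+ d. ennreal (?f d) \<partial>count_space UNIV) = 1" by simp
qed simp

lemma emeasure_draw_pmf_compl:
  assumes feas: "cp_feasible n x" and B: "B \<subseteq> {..<n}"
  shows "emeasure (measure_pmf (draw_pmf n x \<tau>)) (UNIV - Some ` B)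
    = ennreal (1 - (\<Sum>i\<in>B. xbar n x i ((\<tau> + 1) div 2)))"
proof -
  have "measure (measure_pmf (draw_pmf n x \<tau>)) (Some ` B) = (\<Sum>i\<in>B. pmf (draw_pmf n x \<tau>) (Some i))"
    using finite_subset[OF B] by (subst measure_measure_pmf_finite) (auto simp: sum.reindex)
  also have "\<dots> = (\<Sum>i\<in>B. xbar n x i ((\<tau> + 1) div 2))"
    using B by (intro sum.cong) (auto simp: pmf_draw_pmf[OF feas])
  finally show ?thesis
    using measure_pmf.prob_compl[of "Some ` B" "draw_pmf n x \<tau>"]
    by (simp add: measure_pmf.emeasure_eq_measure)
qed

lemma prod_one_minus_le_exp:
  fixes z :: "'a \<Rightarrow> real"
  assumes "\<And>\<tau>. \<tau> \<in> T \<Longrightarrow> 0 \<le> z \<tau> \<and> z \<tau> \<le> 1"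
  shows "(\<Prod>\<tau>\<in>T. 1 - z \<tau>) \<le> exp (- (\<Sum>\<tau>\<in>T. z \<tau>))"
proof (cases "finite T")
  case True
  have "(\<Prod>\<tau>\<in>T. 1 - z \<tau>) \<le> (\<Prod>\<tau>\<in>T. exp (- z \<tau>))"
    using assms by (intro prod_mono) (auto simp: add.commute[of 1] intro: order.trans[OF _ exp_ge_add_one_self])
  then show ?thesis using True by (simp add: exp_sum sum_negf[symmetric])
qed simp

lemma activation_time_gt_eq:
  assumes n: "1 \<le> n"
  shows "{\<omega> \<in> space (poisson_space n x). enat t < activation_time n v \<omega>}
    = prod_emb UNIV (\<lambda>\<tau>. measure_pmf (draw_pmf n x \<tau>)) {1..t}
        (PiE {1..t} (\<lambda>\<tau>. UNIV - Some ` {i. i < n \<and> \<tau> + 4 * v i \<le> t}))"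
proof -
  have "enat t < activation_time n v \<omega> \<longleftrightarrow> (\<forall>i<n. \<not> arrival \<omega> i + enat (4 * v i) \<le> enat t)" for \<omega>
    unfolding activation_time_def using n by (auto simp: Min_gr_iff not_le lessThan_empty_iff)
  also have "\<dots> \<omega> \<longleftrightarrow> (\<forall>\<tau>\<in>{1..t}. \<omega> \<tau> \<in> UNIV - Some ` {i. i < n \<and> \<tau> + 4 * v i \<le> t})" for \<omega>
    by (auto simp: arrival_plus_le_iff)
  moreover have "prod_emb UNIV (\<lambda>\<tau>. measure_pmf (draw_pmf n x \<tau>)) {1..t}
        (PiE {1..t} (\<lambda>\<tau>. UNIV - Some ` {i. i < n \<and> \<tau> + 4 * v i \<le> t}))
     = {\<omega>. \<forall>\<tau>\<in>{1..t}. \<omega> \<tau> \<in> UNIV - Some ` {i. i < n \<and> \<tau> + 4 * v i \<le> t}}"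
    unfolding prod_emb_def
    by (auto simp: space_PiM PiE_UNIV_domain vimage_def restrict_PiE_iff simp del: Diff_iff)
  ultimately show ?thesis by simp
qed

lemma emeasure_activation_time_gt_le:
  assumes n: "1 \<le> n" and feas: "cp_feasible n x"
  shows "emeasure (poisson_space n x) {\<omega> \<in> space (poisson_space n x). enat t < activation_time n v \<omega>}
    \<le> ennreal (exp (- (\<Sum>\<tau>\<in>{1..t}. \<Sum>i\<in>{i. i < n \<and> \<tau> + 4 * v i \<le> t}. xbar n x i ((\<tau> + 1) div 2))))"
proof -
  interpret product_prob_space "\<lambda>\<tau>. measure_pmf (draw_pmf n x \<tau>)" UNIV
    by unfold_locales
  let ?z = "\<lambda>\<tau>. \<Sum>i\<in>{i. i < n \<and> \<tau> + 4 * v i \<le> t}. xbar n x i ((\<tau> + 1) div 2)"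
  have z: "0 \<le> ?z \<tau> \<and> ?z \<tau> \<le> 1" for \<tau>
  proof
    show "0 \<le> ?z \<tau>" using xbar_nonneg[OF feas] by (intro sum_nonneg) auto
    have "?z \<tau> \<le> (\<Sum>i<n. xbar n x i ((\<tau> + 1) div 2))"
      using xbar_nonneg[OF feas] by (intro sum_mono2) auto
    then show "?z \<tau> \<le> 1" using sum_xbar_le_one[OF feas] by (rule order.trans)
  qed
  have "emeasure (poisson_space n x) {\<omega> \<in> space (poisson_space n x). enat t < activation_time n v \<omega>}
      = (\<Prod>\<tau>\<in>{1..t}. emeasure (measure_pmf (draw_pmf n x \<tau>)) (UNIV - Some ` {i. i < n \<and> \<tau> + 4 * v i \<le> t}))"
    unfolding activation_time_gt_eq[OF n] unfolding poisson_space_def by (rule emeasure_PiM_emb) auto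
  also have "\<dots> = ennreal (\<Prod>\<tau>\<in>{1..t}. 1 - ?z \<tau>)"
    using z by (simp add: emeasure_draw_pmf_compl[OF feas] prod_ennreal subset_eq)
  also have "\<dots> \<le> ennreal (exp (- (\<Sum>\<tau>\<in>{1..t}. ?z \<tau>)))"
    using z by (intro ennreal_leI prod_one_minus_le_exp) auto
  finally show ?thesis .
qed

lemma xbar_eq_sum_if:
  assumes "1 \<le> u"
  shows "xbar n x i u = (\<Sum>t'\<in>{1..n}. if t' \<le> u then x i t' / real u else 0)"
proof -
  have "{1..min u n} = {t'\<in>{1..n}. t' \<le> u}" by auto
  then have "xbar n x i u = (1 / real u) * (\<Sum>t'\<in>{t'\<in>{1..n}. t' \<le> u}. x i t')"
    unfolding xbar_def by simp
  also have "\<dots> = (1 / real u) * (\<Sum>t'\<in>{1..n}. if t' \<le> u then x i t' else 0)"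
    by (subst sum.inter_filter) simp_all
  also have "\<dots> = (\<Sum>t'\<in>{1..n}. if t' \<le> u then x i t' / real u else 0)"
    unfolding sum_distrib_left by (intro sum.cong) auto
  finally show ?thesis .
qed

lemma sum_xbar_eq_slot_weight:
  "(\<Sum>\<tau>\<in>{1..t}. \<Sum>i\<in>{i. i < n \<and> \<tau> + 4 * v i \<le> t}. xbar n x i ((\<tau> + 1) div 2))
   = (\<Sum>(i, t')\<in>{..<n} \<times> {1..n}. x i t' * slot_weight t' (t - 4 * v i))"
proof -
  let ?u = "\<lambda>\<tau>::nat. (\<tau> + 1) div 2"
  let ?g = "\<lambda>\<tau> i t'. if \<tau> + 4 * v i \<le> t \<and> t' \<le> ?u \<tau> then x i t' / real (?u \<tau>) else 0"
  have "(\<Sum>i\<in>{i. i < n \<and> \<tau> + 4 * v i \<le> t}. xbar n x i (?u \<tau>)) = (\<Sum>i<n. \<Sum>t'\<in>{1..n}. ?g \<tau> i t')"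
    if "\<tau> \<in> {1..t}" for \<tau>
  proof -
    have "{i. i < n \<and> \<tau> + 4 * v i \<le> t} = {i\<in>{..<n}. \<tau> + 4 * v i \<le> t}" by auto
    then have "(\<Sum>i\<in>{i. i < n \<and> \<tau> + 4 * v i \<le> t}. xbar n x i (?u \<tau>))
        = (\<Sum>i<n. if \<tau> + 4 * v i \<le> t then xbar n x i (?u \<tau>) else 0)"
      by (simp only: sum.inter_filter[OF finite_lessThan])
    also have "\<dots> = (\<Sum>i<n. \<Sum>t'\<in>{1..n}. ?g \<tau> i t')"
      using xbar_eq_sum_if[of "?u \<tau>"] that by (intro sum.cong refl) auto
    finally show ?thesis .
  qed
  then have "(\<Sum>\<tau>\<in>{1..t}. \<Sum>i\<in>{i. i < n \<and> \<tau> + 4 * v i \<le> t}. xbar n x i (?u \<tau>))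
      = (\<Sum>\<tau>\<in>{1..t}. \<Sum>i<n. \<Sum>t'\<in>{1..n}. ?g \<tau> i t')"
    by (rule sum.cong[OF refl])
  also have "\<dots> = (\<Sum>i<n. \<Sum>t'\<in>{1..n}. \<Sum>\<tau>\<in>{1..t}. ?g \<tau> i t')"
    by (subst sum.swap) (intro sum.cong refl sum.swap)
  also have "\<dots> = (\<Sum>i<n. \<Sum>t'\<in>{1..n}. x i t' * slot_weight t' (t - 4 * v i))"
  proof (intro sum.cong refl)
    fix i t'
    have "{\<tau>\<in>{1..t}. \<tau> + 4 * v i \<le> t \<and> t' \<le> ?u \<tau>} = {\<tau>\<in>{1..t - 4 * v i}. t' \<le> ?u \<tau>}" by auto
    then show "(\<Sum>\<tau>\<in>{1..t}. ?g \<tau> i t') = x i t' * slot_weight t' (t - 4 * v i)"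
      unfolding slot_weight_def by (simp add: sum.inter_filter[symmetric] sum_distrib_left)
  qed
  also have "\<dots> = (\<Sum>(i, t')\<in>{..<n} \<times> {1..n}. x i t' * slot_weight t' (t - 4 * v i))"
    by (simp add: sum.cartesian_product)
  finally show ?thesis .
qed

lemma cp_cost_eq:
  "cp_cost n x v = (\<Sum>s. ennreal (max 0 (1 - (\<Sum>(i, t')\<in>{..<n} \<times> {1..n}. if t' + v i \<le> s then x i t' else 0))))"
proof -
  have "(\<Sum>i<n. \<Sum>t'\<in>{t'\<in>{1..n}. real t' < real (Suc s) - real (v i)}. x i t')
      = (\<Sum>(i, t')\<in>{..<n} \<times> {1..n}. if t' + v i \<le> s then x i t' else 0)" for s
  proof -
    have "{t'\<in>{1..n}. real t' < real (Suc s) - real (v i)} = {t'\<in>{1..n}. t' + v i \<le> s}" for i by auto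
    then have "(\<Sum>i<n. \<Sum>t'\<in>{t'\<in>{1..n}. real t' < real (Suc s) - real (v i)}. x i t')
        = (\<Sum>i<n. \<Sum>t'\<in>{1..n}. if t' + v i \<le> s then x i t' else 0)"
      by (simp only: sum.inter_filter[OF finite_atLeastAtMost])
    then show ?thesis by (simp add: sum.cartesian_product)
  qed
  then show ?thesis unfolding cp_cost_def Let_def by simp
qed

text \<open>Summing the tail bound over t: by convexity the mixture over the slots (i, t') costs at
  most the mixture of the individual tails, each of which is at most 4 (t' + v_i).\<close>
lemma nn_integral_activation_time_le:
  assumes n: "1 \<le> n" and feas: "cp_feasible n x"
  shows "(\<integral>\<^sup>+ \<omega>. ennreal_of_enat (activation_time n v \<omega>) \<partial>poisson_space n x) \<le> 4 * cp_cost n x v"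
proof -
  let ?J = "{..<n} \<times> {1..n}"
  have "(\<integral>\<^sup>+ \<omega>. ennreal_of_enat (activation_time n v \<omega>) \<partial>poisson_space n x)
      = (\<Sum>t. emeasure (poisson_space n x) {\<omega> \<in> space (poisson_space n x). enat t < activation_time n v \<omega>})"
    using measurable_activation_time[OF measurable_ident_sets[OF refl] measurable_const[of v]]
    by (intro nn_integral_enat_function) simp
  also have "\<dots> \<le> (\<Sum>t. ennreal (exp (- (\<Sum>j\<in>?J. x (fst j) (snd j) * slot_weight (snd j) (t - 4 * v (fst j))))))"
    using emeasure_activation_time_gt_le[OF n feas]
    by (intro suminf_le summableI) (simp only: sum_xbar_eq_slot_weight case_prod_unfold)
  also have "\<dots> \<le> 4 * (\<Sum>s. ennreal (max 0 (1 - (\<Sum>j\<in>?J. if snd j + v (fst j) \<le> s then x (fst j) (snd j) else 0))))"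
  proof (rule suminf_exp_neg_weighted_le)
    fix j assume "j \<in> ?J"
    then obtain i t' where it: "j = (i, t')" "i < n" "1 \<le> t'" "t' \<le> n" by auto
    show "0 \<le> x (fst j) (snd j)" using feas it unfolding cp_feasible_def by auto
    show "0 \<le> slot_weight (snd j) (t - 4 * v (fst j))" for t by (rule slot_weight_nonneg)
    show "(\<Sum>t. ennreal (exp (- slot_weight (snd j) (t - 4 * v (fst j))))) \<le> ennreal (4 * real (snd j + v (fst j)))"
      using suminf_exp_neg_slot_weight_le[OF \<open>1 \<le> t'\<close>, of "4 * v i"] it by (simp add: algebra_simps)
  qed simp
  also have "\<dots> = 4 * cp_cost n x v"
    by (simp add: cp_cost_eq case_prod_unfold)
  finally show ?thesis .
qed

section \<open>Exchanging the order of integration\<close>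

lemma alg_value_eq_iterated:
  "alg_value n D x = (\<integral>\<^sup>+ \<omega>. \<integral>\<^sup>+ v. \<integral>\<^sup>+ k. indicator {0..4} k * ennreal (exp k / (exp 4 - 1)) *
      ennreal (real (da_cost n k (arrival \<omega>) v)) \<partial>lborel \<partial>measure_pmf D \<partial>poisson_space n x)"
proof -
  let ?P = "poisson_space n x" and ?D = "measure_pmf D"
  let ?f = "\<lambda>k. indicator {0..4} k * ennreal (exp k / (exp 4 - 1))"
  let ?C = "\<lambda>k \<omega> v. ennreal (real (da_cost n k (arrival \<omega>) v))"
  interpret P: prob_space ?P unfolding poisson_space_def
    by (intro prob_space_PiM) (simp add: prob_space_measure_pmf)
  interpret lP: pair_sigma_finite lborel ?P by unfold_locales
  interpret lD: pair_sigma_finite lborel ?D by unfold_locales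
  have f: "?f \<in> borel_measurable lborel" by measurable
  have C_kv: "(\<lambda>p. ?C (fst p) \<omega> (snd p)) \<in> borel_measurable (lborel \<Otimes>\<^sub>M ?D)" for \<omega>
    by (rule measurable_da_cost) measurable
  have "(\<lambda>p. ?C (fst (fst p)) (snd (fst p)) (snd p)) \<in> borel_measurable ((lborel \<Otimes>\<^sub>M ?P) \<Otimes>\<^sub>M ?D)"
    by (rule measurable_da_cost) measurable
  from measure_pmf.borel_measurable_nn_integral_fst[OF this]
  have C_k\<omega>: "(\<lambda>p. \<integral>\<^sup>+ v. ?C (fst p) (snd p) v \<partial>?D) \<in> borel_measurable (lborel \<Otimes>\<^sub>M ?P)"
    by simp
  have "alg_value n D x = (\<integral>\<^sup>+ k. \<integral>\<^sup>+ \<omega>. ?f k * (\<integral>\<^sup>+ v. ?C k \<omega> v \<partial>?D) \<partial>?P \<partial>lborel)"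
    unfolding alg_value_def
  proof (intro nn_integral_cong nn_integral_cmult[symmetric])
    show "(\<lambda>\<omega>. \<integral>\<^sup>+ v. ?C k \<omega> v \<partial>?D) \<in> borel_measurable ?P" for k
      using measurable_Pair2[OF C_k\<omega>, of k] by simp
  qed
  also have "\<dots> = (\<integral>\<^sup>+ \<omega>. \<integral>\<^sup>+ k. ?f k * (\<integral>\<^sup>+ v. ?C k \<omega> v \<partial>?D) \<partial>lborel \<partial>?P)"
    using C_k\<omega> f by (intro lP.Fubini'[symmetric]) (simp add: split_beta')
  also have "\<dots> = (\<integral>\<^sup>+ \<omega>. \<integral>\<^sup>+ k. \<integral>\<^sup>+ v. ?f k * ?C k \<omega> v \<partial>?D \<partial>lborel \<partial>?P)"
    by (intro nn_integral_cong nn_integral_cmult[symmetric]) simp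
  also have "\<dots> = (\<integral>\<^sup>+ \<omega>. \<integral>\<^sup>+ v. \<integral>\<^sup>+ k. ?f k * ?C k \<omega> v \<partial>lborel \<partial>?D \<partial>?P)"
    using C_kv f by (intro nn_integral_cong lD.Fubini'[symmetric]) (simp add: split_beta')
  finally show ?thesis .
qed

lemma alg_value_le_activation_time:
  assumes n: "1 \<le> n"
  shows "alg_value n D x \<le> ennreal (exp 4 / (exp 4 - 1)) *
    (\<integral>\<^sup>+ v. \<integral>\<^sup>+ \<omega>. ennreal_of_enat (activation_time n v \<omega>) \<partial>poisson_space n x \<partial>measure_pmf D)"
proof -
  let ?P = "poisson_space n x" and ?D = "measure_pmf D" and ?c = "ennreal (exp 4 / (exp 4 - 1))"
  let ?G = "\<lambda>\<omega> v. ennreal_of_enat (activation_time n v \<omega>)"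
  interpret P: prob_space ?P unfolding poisson_space_def
    by (intro prob_space_PiM) (simp add: prob_space_measure_pmf)
  interpret PD: pair_sigma_finite ?P ?D by unfold_locales
  have G: "(\<lambda>p. ?G (fst p) (snd p)) \<in> borel_measurable (?P \<Otimes>\<^sub>M ?D)"
    using measurable_activation_time[OF measurable_fst measurable_snd] by measurable
  have "alg_value n D x \<le> (\<integral>\<^sup>+ \<omega>. \<integral>\<^sup>+ v. ?c * ?G \<omega> v \<partial>?D \<partial>?P)"
    unfolding alg_value_eq_iterated activation_time_def
    by (intro nn_integral_mono nn_integral_da_cost_le[OF distinct_arrivals_arrival n])
  also have "\<dots> = ?c * (\<integral>\<^sup>+ \<omega>. \<integral>\<^sup>+ v. ?G \<omega> v \<partial>?D \<partial>?P)"
    using measure_pmf.borel_measurable_nn_integral_fst[OF G]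
    by (simp add: nn_integral_cmult)
  also have "(\<integral>\<^sup>+ \<omega>. \<integral>\<^sup>+ v. ?G \<omega> v \<partial>?D \<partial>?P) = (\<integral>\<^sup>+ v. \<integral>\<^sup>+ \<omega>. ?G \<omega> v \<partial>?P \<partial>?D)"
    using G by (intro PD.Fubini'[symmetric]) (simp add: split_beta')
  finally show ?thesis .
qed

theorem theoremA1:
  fixes n :: nat and D :: "(nat \<Rightarrow> nat) pmf" and x :: "nat \<Rightarrow> nat \<Rightarrow> real"
  assumes "1 \<le> n"
    and "\<forall>v\<in>set_pmf D. \<forall>i<n. 0 < v i \<and> even (v i)"
    and "cp_optimal n D x"
  shows "alg_value n D x \<le> ennreal (4 * exp 4 / (exp 4 - 1)) * OPT n D"
proof -
  let ?c = "ennreal (exp 4 / (exp 4 - 1))"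
  have feas: "cp_feasible n x" using assms(3) unfolding cp_optimal_def by simp
  have "alg_value n D x \<le> ?c *
      (\<integral>\<^sup>+ v. \<integral>\<^sup>+ \<omega>. ennreal_of_enat (activation_time n v \<omega>) \<partial>poisson_space n x \<partial>measure_pmf D)"
    by (rule alg_value_le_activation_time[OF assms(1)])
  also have "\<dots> \<le> ?c * (\<integral>\<^sup>+ v. 4 * cp_cost n x v \<partial>measure_pmf D)"
    by (intro mult_left_mono nn_integral_mono nn_integral_activation_time_le[OF assms(1) feas]) simp
  also have "\<dots> = ?c * (4 * cp_obj n D x)"
    by (simp add: cp_obj_eq nn_integral_cmult)
  also have "\<dots> \<le> ?c * (4 * OPT n D)"
    using cp_obj_le_OPT[OF assms(1,3)] by (intro mult_left_mono) auto
  also have "\<dots> = ennreal (4 * exp 4 / (exp 4 - 1)) * OPT n D"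
    using ennreal_mult'[of 4 "exp 4 / (exp 4 - 1)"] by (simp add: mult.assoc mult.commute)
  finally show ?thesis .
qed

end
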